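(* Let $\mathbf{z}:\mathcal{U}\to\mathcal{Z}$ be a $C^1$ diffeomorphism onto a convex set $\mathcal{Z}$ with inverse $\mathbf{z}\mapsto\mathbf{u}(\mathbf{z})$, and let $\Phi(s;\mathbf{u}_L,\mathbf{u}_R):=\mathbf{u}\big(\mathbf{z}_L+s[\![\mathbf{z}]\!]\big)$ be the path that is linear in $\mathbf{z}$. Let $\bar{\mathbf{B}}^\pm:\mathcal{U}\times\mathcal{U}\to\mathbb{R}^{n\times n}$ be $C^1$ with (a) $2\bar{\mathbf{B}}^\pm(\mathbf{u},\mathbf{u})=\mathbf{B}(\mathbf{u})\,\mathbf{u}_{\mathbf{z}}(\mathbf{z}(\mathbf{u}))$; (b) $\bar{\mathbf{B}}^-(\mathbf{u}_R,\mathbf{u}_L)=\bar{\mathbf{B}}^+(\mathbf{u}_L,\mathbf{u}_R)$; (c) $\bar{\mathbf{B}}^-(\mathbf{u}_L,\mathbf{u}_R)+\bar{\mathbf{B}}^+(\mathbf{u}_L,\mathbf{u}_R)=\int_0^1\mathbf{B}(\Phi(s))\,\mathbf{u}_{\mathbf{z}}(\mathbf{z}_L+s[\![\mathbf{z}]\!])\,ds$; and let $\mathbf{f}^*:\mathcal{U}\times\mathcal{U}\to\mathbb{R}^n$ be $C^1$, consistent ($\mathbf{f}^*(\mathbf{u},\mathbf{u})=\mathbf{f}(\mathbf{u})$) and symmetric ($\mathbf{f}^*(\mathbf{u}_L,\mathbf{u}_R)=\mathbf{f}^*(\mathbf{u}_R,\mathbf{u}_L)$), such that for all $\mathbf{u}_L,\mathbf{u}_R$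 (d) $[\![q-\mathbf{w}^T\mathbf{f}]\!]=\mathbf{w}_R^T\bar{\mathbf{B}}^+(\mathbf{u}_L,\mathbf{u}_R)[\![\mathbf{z}]\!]+\mathbf{w}_L^T\bar{\mathbf{B}}^-(\mathbf{u}_L,\mathbf{u}_R)[\![\mathbf{z}]\!]-[\![\mathbf{w}]\!]^T\mathbf{f}^*(\mathbf{u}_L,\mathbf{u}_R)$. Then the fluctuations $$\mathbf{D}^-(\mathbf{u}_L,\mathbf{u}_R)=\bar{\mathbf{B}}^-(\mathbf{u}_L,\mathbf{u}_R)[\![\mathbf{z}]\!]+\mathbf{f}^*(\mathbf{u}_L,\mathbf{u}_R)-\mathbf{f}(\mathbf{u}_L),\qquad \mathbf{D}^+(\mathbf{u}_L,\mathbf{u}_R)=\bar{\mathbf{B}}^+(\mathbf{u}_L,\mathbf{u}_R)[\![\mathbf{z}]\!]+\mathbf{f}(\mathbf{u}_R)-\mathbf{f}^*(\mathbf{u}_L,\mathbf{u}_R)$$ are entropy conservative fluctuations, i.e. satisfy (C1)–(C5) with respect to the path $\Phi$.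
   Context: System: $\mathbf{u}_t+\mathbf{f}(\mathbf{u})_x+\mathbf{B}(\mathbf{u})\mathbf{u}_x=0$, $\mathbf{u}\in\mathcal{U}\subset\mathbb{R}^n$, with $C^1$ flux $\mathbf{f}$ and continuous $\mathbf{B}$, generalized Jacobian $\mathbf{A}:=\mathbf{f}_{\mathbf{u}}+\mathbf{B}$. Entropy pair: strictly convex $C^2$ $S$ and entropy flux $q$ with $q_{\mathbf{u}}=\mathbf{w}^T(\mathbf{f}_{\mathbf{u}}+\mathbf{B})$, $\mathbf{w}(\mathbf{u}):=S_{\mathbf{u}}(\mathbf{u})$. Notation: $[\![\cdot]\!]=(\cdot)_R-(\cdot)_L$; $\mathbf{w}_L=\mathbf{w}(\mathbf{u}_L)$, $\mathbf{z}_L=\mathbf{z}(\mathbf{u}_L)$, $q_L=q(\mathbf{u}_L)$, etc. EC fluctuation conditions, for all $\mathbf{u},\mathbf{u}_L,\mathbf{u}_R$ and a given family of paths $\Phi(s;\mathbf{u}_L,\mathbf{u}_R)$: (C1) $\mathbf{D}^\pm(\mathbf{u},\mathbf{u})=0$; (C2) $\mathbf{D}^-(\mathbf{u}_L,\mathbf{u}_R)+\mathbf{D}^+(\mathbf{u}_L,\mathbf{u}_R)=\int_0^1\mathbf{A}(\Phi(s;\mathbf{u}_L,\mathbf{u}_R))\partial_s\Phi(s;\mathbf{u}_L,\mathbf{u}_R)\,ds$; (C3) $\mathbf{D}^-(\mathbf{u}_L,\mathbf{u}_R)+\mathbf{D}^+(\mathbf{u}_R,\mathbf{u}_L)=0$;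 (C4) $\mathbf{w}_L^T\mathbf{D}^-(\mathbf{u}_L,\mathbf{u}_R)+\mathbf{w}_R^T\mathbf{D}^+(\mathbf{u}_L,\mathbf{u}_R)=q_R-q_L$; (C5) $\frac{\partial\mathbf{D}^-(\mathbf{u}_L,\mathbf{u}_R)}{\partial\mathbf{u}_R}\big|_{\mathbf{u}_R=\mathbf{u}_L}=\frac12\mathbf{A}(\mathbf{u}_L)$. *)

theory Defs
  imports "HOL-Analysis.Analysis"
begin

definition strict_convex_on :: "'a::real_vector set \<Rightarrow> ('a \<Rightarrow> real) \<Rightarrow> bool" where
  "strict_convex_on A F \<longleftrightarrow>
     (\<forall>x\<in>A. \<forall>y\<in>A. \<forall>t::real. x \<noteq> y \<and> 0 < t \<and> t < 1 \<longrightarrow>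
        F ((1 - t) *\<^sub>R x + t *\<^sub>R y) < (1 - t) * F x + t * F y)"

definition C1_on :: "'a::real_normed_vector set \<Rightarrow> ('a \<Rightarrow> 'b::real_normed_vector) \<Rightarrow> bool" where
  "C1_on A F \<longleftrightarrow>
     (\<exists>F'. (\<forall>x\<in>A. (F has_derivative blinfun_apply (F' x)) (at x)) \<and> continuous_on A F')"

definition jac :: "(real^'n \<Rightarrow> real^'m) \<Rightarrow> real^'n \<Rightarrow> real^'n^'m" where
  "jac F x = matrix (frechet_derivative F (at x))"

end

theory Submission
  imports Defs
begin

text \<open>Along the path that is linear in \<open>z\<close>, the chain rule gives
  \<open>\<Phi>' = u\<^sub>z \<lbrakk>z\<rbrakk>\<close>. Hence the \<open>f\<^sub>u\<close> part of the integrand in (C2) integrates to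
  \<open>\<lbrakk>f\<rbrakk>\<close> by the fundamental theorem of calculus, and the \<open>B\<close> part integrates to
  \<open>(B\<^sup>- + B\<^sup>+) \<lbrakk>z\<rbrakk>\<close> by (c). For (C5), symmetry and consistency of \<open>f\<^sup>*\<close> force its
  partial derivative in \<open>u\<^sub>R\<close> on the diagonal to be half of \<open>f\<^sub>u\<close>. Since \<open>\<lbrakk>z\<rbrakk>\<close>
  vanishes there, the derivative of \<open>B\<^sup>- \<lbrakk>z\<rbrakk>\<close> is
  \<open>B\<^sup>-(u,u) z\<^sub>u = B u\<^sub>z z\<^sub>u / 2 = B / 2\<close>. (C1), (C3) and (C4) are algebraic consequences of
  consistency, symmetry, (b) and (d).\<close>

lemma bounded_bilinear_matrix_vector_mult:
  "bounded_bilinear (\<lambda>(M::real^'n^'m) (x::real^'n). M *v x)"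
proof -
  have "bilinear (\<lambda>(M::real^'n^'m) (x::real^'n). M *v x)"
    unfolding bilinear_def
    by (auto intro!: linearI simp: matrix_vector_mult_add_rdistrib matrix_vector_mult_scaleR
        matrix_vector_right_distrib scaleR_matrix_vector_assoc)
  then show ?thesis by (simp add: bilinear_conv_bounded_bilinear)
qed

lemma bounded_bilinear_matrix_matrix_mult:
  "bounded_bilinear (\<lambda>(M::real^'n^'m) (N::real^'k^'n). M ** N)"
proof -
  have "bilinear (\<lambda>(M::real^'n^'m) (N::real^'k^'n). M ** N)"
    unfolding bilinear_def
    by (auto intro!: linearI simp: matrix_matrix_mult_def vec_eq_iff sum.distrib algebra_simps
        scaleR_sum_right sum_distrib_left)
  then show ?thesis by (simp add: bilinear_conv_bounded_bilinear)
qed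

lemma integral_matrix_vector_mult_left:
  fixes M :: "real \<Rightarrow> real^'n^'m"
  assumes "M integrable_on S"
  shows "integral S (\<lambda>s. M s *v v) = integral S M *v v"
  using integral_linear[OF assms
      bounded_bilinear.bounded_linear_left[OF bounded_bilinear_matrix_vector_mult]]
  by (simp add: o_def)

lemma jac_vector_mult:
  assumes "(F has_derivative F') (at x)"
  shows "jac F x *v h = F' h"
proof -
  have "frechet_derivative F (at x) = F'"
    using frechet_derivative_at[OF assms] by simp
  then show ?thesis
    using has_derivative_linear[OF assms] by (simp add: jac_def matrix_works)
qed

lemma C1_on_imp_differentiable:
  "C1_on S F \<Longrightarrow> x \<in> S \<Longrightarrow> F differentiable (at x)"
  unfolding C1_on_def differentiable_def by blast

lemma C1_on_imp_continuous_on: "C1_on S F \<Longrightarrow> continuous_on S F"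
  by (meson C1_on_imp_differentiable continuous_at_imp_continuous_on
      differentiable_imp_continuous_within)

lemma continuous_on_jac:
  fixes F :: "real^'n \<Rightarrow> real^'m"
  assumes "C1_on S F"
  shows "continuous_on S (jac F)"
proof -
  obtain F' where F': "\<And>x. x \<in> S \<Longrightarrow> (F has_derivative blinfun_apply (F' x)) (at x)"
    and cont: "continuous_on S F'"
    using assms unfolding C1_on_def by blast
  have "continuous_on S (\<lambda>x. matrix (blinfun_apply (F' x)) :: real^'n^'m)"
    unfolding matrix_def
    by (intro continuous_on_vec_lambda continuous_on_component blinfun.continuous_on cont
        continuous_on_const)
  moreover have "jac F x = matrix (blinfun_apply (F' x))" if "x \<in> S" for x
    using frechet_derivative_at[OF F'[OF that]] by (simp add: jac_def)
  ultimately show ?thesis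
    using continuous_on_cong by fastforce
qed

lemma has_integral_jac_vector_mult_path:
  fixes p p' :: "real \<Rightarrow> real^'n" and F :: "real^'n \<Rightarrow> real^'m"
  assumes "a \<le> b"
    and p': "\<And>s. s \<in> {a..b} \<Longrightarrow> (p has_vector_derivative p' s) (at s within {a..b})"
    and F: "\<And>s. s \<in> {a..b} \<Longrightarrow> F differentiable (at (p s))"
  shows "((\<lambda>s. jac F (p s) *v p' s) has_integral F (p b) - F (p a)) {a..b}"
proof -
  have "((\<lambda>s. F (p s)) has_vector_derivative jac F (p s) *v p' s) (at s within {a..b})"
    if s: "s \<in> {a..b}" for s
  proof -
    obtain F' where F': "(F has_derivative F') (at (p s))"
      using F[OF s] unfolding differentiable_def by blast
    have "(F \<circ> p has_vector_derivative F' (p' s)) (at s within {a..b})"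
      by (rule vector_derivative_diff_chain_within[OF p'[OF s] has_derivative_at_withinI[OF F']])
    then show ?thesis
      by (simp add: o_def jac_vector_mult[OF F'])
  qed
  then show ?thesis
    using fundamental_theorem_of_calculus[OF \<open>a \<le> b\<close>, of "\<lambda>s. F (p s)"] by simp
qed

lemma has_vector_derivative_along_line:
  fixes G :: "real^'n \<Rightarrow> real^'m"
  assumes "(G has_derivative G') (at (a + s *\<^sub>R v))"
  shows "((\<lambda>t. G (a + t *\<^sub>R v)) has_vector_derivative jac G (a + s *\<^sub>R v) *v v) (at s)"
proof -
  have "((\<lambda>t. a + t *\<^sub>R v) has_derivative (\<lambda>t. t *\<^sub>R v)) (at s)"
    by (auto intro!: derivative_eq_intros)
  from diff_chain_at[OF this assms] show ?thesis
    unfolding has_vector_derivative_def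
    using linear_scale[OF has_derivative_linear[OF assms]]
    by (simp add: o_def jac_vector_mult[OF assms])
qed

lemma integral_jac_plus_along_linear_path:
  fixes f :: "real^'n \<Rightarrow> real^'m" and B :: "real^'n \<Rightarrow> real^'n^'m"
    and uz :: "real^'k \<Rightarrow> real^'n"
  assumes Z: "convex Z" "a \<in> Z" "b \<in> Z"
    and uz_into: "uz ` Z \<subseteq> U" and uz_C1: "C1_on Z uz"
    and f_C1: "C1_on U f" and B_cont: "continuous_on U B"
  defines "g \<equiv> \<lambda>s. a + s *\<^sub>R (b - a)"
  shows "integral {0..1} (\<lambda>s. (jac f (uz (g s)) + B (uz (g s))) *v
            vector_derivative (\<lambda>t. uz (g t)) (at s within {0..1}))
       = f (uz b) - f (uz a) + integral {0..1} (\<lambda>s. B (uz (g s)) ** jac uz (g s)) *v (b - a)"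
proof -
  have gZ: "g s \<in> Z" if "s \<in> {0..1}" for s
    using that convexD[OF Z, of "1 - s" s] by (simp add: g_def algebra_simps)
  have gU: "uz (g s) \<in> U" if "s \<in> {0..1}" for s
    using uz_into gZ[OF that] by blast
  have "((\<lambda>t. uz (g t)) has_vector_derivative jac uz (g s) *v (b - a)) (at s)"
    if "s \<in> {0..1}" for s
    using C1_on_imp_differentiable[OF uz_C1 gZ[OF that]]
    unfolding g_def differentiable_def by (metis has_vector_derivative_along_line)
  then have p': "((\<lambda>t. uz (g t)) has_vector_derivative jac uz (g s) *v (b - a)) (at s within {0..1})"
    and vd: "vector_derivative (\<lambda>t. uz (g t)) (at s within {0..1}) = jac uz (g s) *v (b - a)"
    if "s \<in> {0..1}" for s
    using that vector_derivative_within_cbox[of 0 1 s, OF _ _ has_vector_derivative_at_within]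
    by (auto intro: has_vector_derivative_at_within)
  have ftc: "((\<lambda>s. jac f (uz (g s)) *v (jac uz (g s) *v (b - a)))
      has_integral f (uz b) - f (uz a)) {0..1}"
    using has_integral_jac_vector_mult_path[of 0 1, OF _ p' C1_on_imp_differentiable[OF f_C1 gU]]
    by (simp add: g_def)
  have "continuous_on {0..1} g"
    unfolding g_def by (intro continuous_intros)
  then have "continuous_on {0..1} (\<lambda>s. B (uz (g s)) ** jac uz (g s))"
    using gZ gU
    by (intro bounded_bilinear.continuous_on[OF bounded_bilinear_matrix_matrix_mult]
        continuous_on_compose2[OF B_cont]
        continuous_on_compose2[OF C1_on_imp_continuous_on[OF uz_C1]]
        continuous_on_compose2[OF continuous_on_jac[OF uz_C1]]) auto
  then have M: "(\<lambda>s. B (uz (g s)) ** jac uz (g s)) integrable_on {0..1}"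
    by (rule integrable_continuous_interval)
  have "integral {0..1} (\<lambda>s. (jac f (uz (g s)) + B (uz (g s))) *v
            vector_derivative (\<lambda>t. uz (g t)) (at s within {0..1}))
      = integral {0..1} (\<lambda>s. jac f (uz (g s)) *v (jac uz (g s) *v (b - a))
            + (B (uz (g s)) ** jac uz (g s)) *v (b - a))"
    by (rule integral_cong) (simp add: vd matrix_vector_mult_add_rdistrib flip: matrix_vector_mul_assoc)
  also have "\<dots> = f (uz b) - f (uz a)
      + integral {0..1} (\<lambda>s. B (uz (g s)) ** jac uz (g s)) *v (b - a)"
    using ftc integrable_linear[OF M
        bounded_bilinear.bounded_linear_left[OF bounded_bilinear_matrix_vector_mult]]
    by (simp add: integral_add has_integral_integrable_integral o_def
        integral_matrix_vector_mult_left[OF M])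
  finally show ?thesis .
qed

lemma has_derivative_symmetric_flux_right:
  fixes fs :: "'a::real_normed_vector \<times> 'a \<Rightarrow> 'b::real_normed_vector"
  assumes U: "open U" "u \<in> U"
    and fs': "(fs has_derivative D) (at (u, u))"
    and symmetric: "\<And>x y. x \<in> U \<Longrightarrow> y \<in> U \<Longrightarrow> fs (x, y) = fs (y, x)"
    and consistent: "\<And>x. x \<in> U \<Longrightarrow> fs (x, x) = f x"
    and f': "(f has_derivative f') (at u)"
  shows "((\<lambda>y. fs (u, y)) has_derivative (\<lambda>h. (1/2) *\<^sub>R f' h)) (at u)"
proof -
  have diag: "D (h, h) = f' h" for h
  proof -
    have "(fs \<circ> (\<lambda>x. (x, x)) has_derivative D \<circ> (\<lambda>h. (h, h))) (at u)"
      by (rule diff_chain_at) (auto intro!: derivative_eq_intros fs')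
    then have "(f has_derivative D \<circ> (\<lambda>h. (h, h))) (at u)"
      by (rule has_derivative_transform_within_open[OF _ U]) (simp add: consistent)
    from has_derivative_unique[OF this f'] show ?thesis by (simp add: fun_eq_iff)
  qed
  have swap: "D (h, k) = D (k, h)" for h k
  proof -
    have "(fs \<circ> (\<lambda>p. (snd p, fst p)) has_derivative D \<circ> (\<lambda>p. (snd p, fst p))) (at (u, u))"
      by (rule diff_chain_at) (auto intro!: derivative_eq_intros fs')
    then have "(fs has_derivative D \<circ> (\<lambda>p. (snd p, fst p))) (at (u, u))"
      by (rule has_derivative_transform_within_open[OF _ open_Times[OF U(1) U(1)]])
         (use U in \<open>auto simp: symmetric\<close>)
    from has_derivative_unique[OF this fs'] show ?thesis by (simp add: fun_eq_iff)
  qed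
  have "D (h, h) = D (h, 0) + D (0, h)" for h
    using linear_add[OF has_derivative_linear[OF fs'], of "(h, 0)" "(0, h)"] by simp
  then have half: "D (0, h) = (1/2) *\<^sub>R f' h" for h
    by (metis diag swap scaleR_half_double)
  have "(fs \<circ> Pair u has_derivative D \<circ> Pair 0) (at u)"
    by (rule diff_chain_at) (auto intro!: derivative_eq_intros fs')
  then show ?thesis by (simp add: o_def half)
qed

lemma derivative_left_inverse:
  assumes U: "open U" "u \<in> U"
    and inverse: "\<And>x. x \<in> U \<Longrightarrow> g (z x) = x"
    and z': "(z has_derivative z') (at u)" and g': "(g has_derivative g') (at (z u))"
  shows "g' (z' h) = h"
proof -
  have "((\<lambda>x. x) has_derivative g' \<circ> z') (at u)"
    by (rule has_derivative_transform_within_open[OF diff_chain_at[OF z' g'] U])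
       (simp add: inverse)
  from has_derivative_unique[OF this has_derivative_ident] show ?thesis
    by (simp add: fun_eq_iff)
qed

lemma has_derivative_fluctuation_at_diagonal:
  fixes Bm :: "(real^'n) \<times> (real^'n) \<Rightarrow> real^'k^'m" and fs :: "(real^'n) \<times> (real^'n) \<Rightarrow> real^'m"
    and f :: "real^'n \<Rightarrow> real^'m" and B :: "real^'n \<Rightarrow> real^'n^'m"
    and z :: "real^'n \<Rightarrow> real^'k" and uz :: "real^'k \<Rightarrow> real^'n"
  assumes U: "open U" "u \<in> U"
    and Bm: "Bm differentiable (at (u, u))"
    and Bm_diag: "(2::real) *\<^sub>R Bm (u, u) = B u ** jac uz (z u)"
    and fs: "fs differentiable (at (u, u))"
    and symmetric: "\<And>x y. x \<in> U \<Longrightarrow> y \<in> U \<Longrightarrow> fs (x, y) = fs (y, x)"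
    and consistent: "\<And>x. x \<in> U \<Longrightarrow> fs (x, x) = f x"
    and f: "f differentiable (at u)"
    and z: "z differentiable (at u)" and uz: "uz differentiable (at (z u))"
    and inverse: "\<And>x. x \<in> U \<Longrightarrow> uz (z x) = x"
  shows "((\<lambda>y. Bm (u, y) *v (z y - z u) + fs (u, y) - f u) has_derivative
           (\<lambda>h. ((1/2::real) *\<^sub>R (jac f u + B u)) *v h)) (at u)"
proof -
  obtain Bm' fs' f' z' uz' where Bm': "(Bm has_derivative Bm') (at (u, u))"
    and fs': "(fs has_derivative fs') (at (u, u))" and f': "(f has_derivative f') (at u)"
    and z': "(z has_derivative z') (at u)" and uz': "(uz has_derivative uz') (at (z u))"
    using Bm fs f z uz unfolding differentiable_def by blast
  have "(Bm \<circ> Pair u has_derivative Bm' \<circ> Pair 0) (at u)"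
    by (rule diff_chain_at) (auto intro!: derivative_eq_intros Bm')
  moreover have "((\<lambda>y. z y - z u) has_derivative z') (at u)"
    using z' by (auto intro!: derivative_eq_intros)
  ultimately have "((\<lambda>y. Bm (u, y) *v (z y - z u)) has_derivative (\<lambda>h. Bm (u, u) *v z' h)) (at u)"
    using bounded_bilinear.FDERIV[OF bounded_bilinear_matrix_vector_mult] by (fastforce simp: o_def)
  moreover have "Bm (u, u) *v z' h = (1/2::real) *\<^sub>R (B u *v h)" for h
  proof -
    have "jac uz (z u) *v z' h = h"
      by (simp add: jac_vector_mult[OF uz'] derivative_left_inverse[OF U inverse z' uz'])
    then show ?thesis
      using arg_cong[OF Bm_diag, of "scaleR (1/2)"]
      by (simp flip: scaleR_matrix_vector_assoc matrix_vector_mul_assoc)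
  qed
  moreover have "((\<lambda>y. fs (u, y)) has_derivative (\<lambda>h. (1/2::real) *\<^sub>R (jac f u *v h))) (at u)"
    using has_derivative_symmetric_flux_right[OF U fs' symmetric consistent f']
    by (simp add: jac_vector_mult[OF f'])
  ultimately have "((\<lambda>y. Bm (u, y) *v (z y - z u) + fs (u, y) - f u) has_derivative
      (\<lambda>h. (1/2::real) *\<^sub>R (B u *v h) + (1/2::real) *\<^sub>R (jac f u *v h) - 0)) (at u)"
    by (auto intro!: derivative_eq_intros)
  then show ?thesis
    by (simp add: matrix_vector_mult_add_rdistrib algebra_simps flip: scaleR_matrix_vector_assoc)
qed

theorem theorem3:
  fixes U Z :: "(real^'n) set"
    and f :: "real^'n \<Rightarrow> real^'n"
    and B :: "real^'n \<Rightarrow> real^'n^'n"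
    and S q :: "real^'n \<Rightarrow> real"
    and w :: "real^'n \<Rightarrow> real^'n"
    and z uz :: "real^'n \<Rightarrow> real^'n"
    and Bm Bp :: "(real^'n) \<times> (real^'n) \<Rightarrow> real^'n^'n"
    and fs :: "(real^'n) \<times> (real^'n) \<Rightarrow> real^'n"
    and A :: "real^'n \<Rightarrow> real^'n^'n"
    and Phi :: "real \<Rightarrow> real^'n \<Rightarrow> real^'n \<Rightarrow> real^'n"
    and Dm Dp :: "real^'n \<Rightarrow> real^'n \<Rightarrow> real^'n"
  assumes U_open: "open U"
    and f_C1: "C1_on U f"
    and B_cont: "continuous_on U B"
    and A_def: "A = (\<lambda>u. jac f u + B u)"
    and S_strict_convex: "strict_convex_on U S"
    and S_grad: "\<And>u. u \<in> U \<Longrightarrow> (S has_derivative (\<lambda>h. w u \<bullet> h)) (at u)"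
    and S_C1: "C1_on U S" and w_C1: "C1_on U w"
    and q_flux: "\<And>u. u \<in> U \<Longrightarrow> (q has_derivative (\<lambda>h. w u \<bullet> (A u *v h))) (at u)"
    and Z_convex: "convex Z"
    and z_onto: "z ` U = Z"
    and uz_into: "uz ` Z \<subseteq> U"
    and uz_z: "\<And>u. u \<in> U \<Longrightarrow> uz (z u) = u"
    and z_uz: "\<And>y. y \<in> Z \<Longrightarrow> z (uz y) = y"
    and z_C1: "C1_on U z"
    and uz_C1: "C1_on Z uz"
    and Phi_def: "Phi = (\<lambda>s uL uR. uz (z uL + s *\<^sub>R (z uR - z uL)))"
    and Bm_C1: "C1_on (U \<times> U) Bm"
    and Bp_C1: "C1_on (U \<times> U) Bp"
    and a_m: "\<And>u. u \<in> U \<Longrightarrow> (2::real) *\<^sub>R Bm (u, u) = B u ** jac uz (z u)"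
    and a_p: "\<And>u. u \<in> U \<Longrightarrow> (2::real) *\<^sub>R Bp (u, u) = B u ** jac uz (z u)"
    and b: "\<And>uL uR. uL \<in> U \<Longrightarrow> uR \<in> U \<Longrightarrow> Bm (uR, uL) = Bp (uL, uR)"
    and c: "\<And>uL uR. uL \<in> U \<Longrightarrow> uR \<in> U \<Longrightarrow>
              Bm (uL, uR) + Bp (uL, uR) =
              integral {0..1} (\<lambda>s. B (Phi s uL uR) ** jac uz (z uL + s *\<^sub>R (z uR - z uL)))"
    and fs_C1: "C1_on (U \<times> U) fs"
    and fs_consistent: "\<And>u. u \<in> U \<Longrightarrow> fs (u, u) = f u"
    and fs_symmetric: "\<And>uL uR. uL \<in> U \<Longrightarrow> uR \<in> U \<Longrightarrow> fs (uL, uR) = fs (uR, uL)"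
    and d: "\<And>uL uR. uL \<in> U \<Longrightarrow> uR \<in> U \<Longrightarrow>
              (q uR - w uR \<bullet> f uR) - (q uL - w uL \<bullet> f uL) =
                w uR \<bullet> (Bp (uL, uR) *v (z uR - z uL))
              + w uL \<bullet> (Bm (uL, uR) *v (z uR - z uL))
              - (w uR - w uL) \<bullet> fs (uL, uR)"
    and Dm_def: "Dm = (\<lambda>uL uR. Bm (uL, uR) *v (z uR - z uL) + fs (uL, uR) - f uL)"
    and Dp_def: "Dp = (\<lambda>uL uR. Bp (uL, uR) *v (z uR - z uL) + f uR - fs (uL, uR))"
  shows "(\<forall>u\<in>U. Dm u u = 0 \<and> Dp u u = 0)
       \<and> (\<forall>uL\<in>U. \<forall>uR\<in>U. Dm uL uR + Dp uL uR =
             integral {0..1} (\<lambda>s. A (Phi s uL uR) *v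
                vector_derivative (\<lambda>t. Phi t uL uR) (at s within {0..1})))
       \<and> (\<forall>uL\<in>U. \<forall>uR\<in>U. Dm uL uR + Dp uR uL = 0)
       \<and> (\<forall>uL\<in>U. \<forall>uR\<in>U. w uL \<bullet> Dm uL uR + w uR \<bullet> Dp uL uR = q uR - q uL)
       \<and> (\<forall>uL\<in>U. ((\<lambda>uR. Dm uL uR) has_derivative (\<lambda>h. ((1/2::real) *\<^sub>R A uL) *v h)) (at uL))"
proof -
  have zU: "z u \<in> Z" if "u \<in> U" for u
    using z_onto that by blast
  have C3: "Dm uL uR + Dp uR uL = 0" if "uL \<in> U" "uR \<in> U" for uL uR
    using b[OF that(2,1)] fs_symmetric[OF that]
    by (simp add: Dm_def Dp_def matrix_vector_mult_diff_distrib algebra_simps)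
  \<comment> \<open>(C4) is (d) rearranged.\<close>
  have C4: "w uL \<bullet> Dm uL uR + w uR \<bullet> Dp uL uR = q uR - q uL" if "uL \<in> U" "uR \<in> U" for uL uR
    using d[OF that] by (simp add: Dm_def Dp_def algebra_simps inner_diff_left inner_diff_right)
  have C2: "Dm uL uR + Dp uL uR = integral {0..1} (\<lambda>s. A (Phi s uL uR) *v
              vector_derivative (\<lambda>t. Phi t uL uR) (at s within {0..1}))"
    if "uL \<in> U" "uR \<in> U" for uL uR
  proof -
    have "Dm uL uR + Dp uL uR = f uR - f uL + (Bm (uL, uR) + Bp (uL, uR)) *v (z uR - z uL)"
      by (simp add: Dm_def Dp_def matrix_vector_mult_add_rdistrib)
    then show ?thesis
      using integral_jac_plus_along_linear_path[OF Z_convex zU zU uz_into uz_C1 f_C1 B_cont, OF that]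
      by (simp add: c[OF that] uz_z[OF that(1)] uz_z[OF that(2)] A_def Phi_def)
  qed
  have C5: "((\<lambda>uR. Dm u uR) has_derivative (\<lambda>h. ((1/2::real) *\<^sub>R A u) *v h)) (at u)"
    if u: "u \<in> U" for u
    using has_derivative_fluctuation_at_diagonal[where B = B and f = f, OF U_open u
        C1_on_imp_differentiable[OF Bm_C1 SigmaI[OF u u]] a_m[OF u]
        C1_on_imp_differentiable[OF fs_C1 SigmaI[OF u u]] fs_symmetric fs_consistent
        C1_on_imp_differentiable[OF f_C1 u] C1_on_imp_differentiable[OF z_C1 u]
        C1_on_imp_differentiable[OF uz_C1 zU[OF u]] uz_z]
    by (simp add: A_def Dm_def)
  show ?thesis
    using C2 C3 C4 C5 by (simp add: Dm_def Dp_def fs_consistent)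
qed

end
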